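(* Suppose $G_{\text{hon}}$ is connected and let $\beta>1$, $A_j=\lceil j^\beta\rceil$. With $h_\dagger=(8\beta\bar d_{\text{hon}}/\Upsilon)\log(8\beta\bar d_{\text{hon}}n/\Upsilon)$, $$\mathbb E[A_{2\bar\tau_{\text{spr}}}]\le(2e)^{2\beta}n^\beta\Big(h_\dagger^\beta+\frac1{\beta-1}\Big),$$ so in particular $\mathbb E[A_{2\bar\tau_{\text{spr}}}]=\tilde O\big((n\bar d_{\text{hon}}/\Upsilon)^\beta\big)$.
   Context: $G=([n+m],E)$ undirected, honest agents $[n]$; for $i\in[n]$, $N_{\text{hon}}(i)$ honest neighbors, $d_{\text{hon}}(i)=|N_{\text{hon}}(i)|$, $d(i)$ total degree, $\bar d_{\text{hon}}=\max_i d_{\text{hon}}(i)$; $G_{\text{hon}}$ the honest subgraph; $\Upsilon=\min_{i\in[n]}d_{\text{hon}}(i)/d(i)$; $i^\star\in[n]$ fixed. Noisy rumor process: independent $\bar Y_j^{(i)}\sim$Bernoulli$(\Upsilon)$, $\bar H_j^{(i)}\sim$Uniform$(N_{\text{hon}}(i))$; $\bar{\mathcal I}_0=\{i^\star\}$, $\bar{\mathcal I}_j=\bar{\mathcal I}_{j-1}\cup\{i\notin\bar{\mathcal I}_{j-1}:\bar Y_j^{(i)}=1,\bar H_j^{(i)}\in\bar{\mathcal I}_{j-1}\}$; $\bar\tau_{\text{spr}}=\inf\{j\in\mathbb N:\bar{\mathcal I}_j=[n]\}$. *)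

theory Defs
  imports "HOL-Probability.Probability"
begin

text \<open>Vertices are natural numbers; the graph G lives on [n+m] = {1..n+m},
honest agents are [n] = {1..n}. The graph is given by an edge predicate E.\<close>

definition undirected_graph :: "nat set \<Rightarrow> (nat \<Rightarrow> nat \<Rightarrow> bool) \<Rightarrow> bool" where
  "undirected_graph V E \<longleftrightarrow> (\<forall>x y. E x y \<longrightarrow> x \<in> V \<and> y \<in> V \<and> x \<noteq> y \<and> E y x)"

definition hon_nbrs :: "nat \<Rightarrow> (nat \<Rightarrow> nat \<Rightarrow> bool) \<Rightarrow> nat \<Rightarrow> nat set" where
  "hon_nbrs n E i = {k \<in> {1..n}. E i k}"

definition dhon :: "nat \<Rightarrow> (nat \<Rightarrow> nat \<Rightarrow> bool) \<Rightarrow> nat \<Rightarrow> nat" where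
  "dhon n E i = card (hon_nbrs n E i)"

definition deg :: "nat \<Rightarrow> nat \<Rightarrow> (nat \<Rightarrow> nat \<Rightarrow> bool) \<Rightarrow> nat \<Rightarrow> nat" where
  "deg n m E i = card {k \<in> {1..n+m}. E i k}"

definition dhon_max :: "nat \<Rightarrow> (nat \<Rightarrow> nat \<Rightarrow> bool) \<Rightarrow> nat" where
  "dhon_max n E = Max (dhon n E ` {1..n})"

definition Upsilon :: "nat \<Rightarrow> nat \<Rightarrow> (nat \<Rightarrow> nat \<Rightarrow> bool) \<Rightarrow> real" where
  "Upsilon n m E = Min ((\<lambda>i. real (dhon n E i) / real (deg n m E i)) ` {1..n})"

definition hon_connected :: "nat \<Rightarrow> (nat \<Rightarrow> nat \<Rightarrow> bool) \<Rightarrow> bool" where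
  "hon_connected n E \<longleftrightarrow>
     (\<forall>i\<in>{1..n}. \<forall>k\<in>{1..n}. (\<lambda>x y. E x y \<and> x \<in> {1..n} \<and> y \<in> {1..n})\<^sup>*\<^sup>* i k)"

text \<open>One round j: for each honest i independently, the pair (Y_j^(i), H_j^(i)) with
 Y ~ Bernoulli(Upsilon), H ~ Uniform(N_hon(i)), independent.\<close>
definition round_pmf :: "nat \<Rightarrow> (nat \<Rightarrow> nat \<Rightarrow> bool) \<Rightarrow> real \<Rightarrow> (nat \<Rightarrow> bool \<times> nat) pmf" where
  "round_pmf n E p = Pi_pmf {1..n} (False, 0)
      (\<lambda>i. pair_pmf (bernoulli_pmf p) (pmf_of_set (hon_nbrs n E i)))"

text \<open>Whole noisy process: rounds indexed by j (round 0 is unused), all independent.\<close>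
definition noisy_space :: "nat \<Rightarrow> nat \<Rightarrow> (nat \<Rightarrow> nat \<Rightarrow> bool) \<Rightarrow> (nat \<Rightarrow> nat \<Rightarrow> bool \<times> nat) measure" where
  "noisy_space n m E = PiM UNIV (\<lambda>j::nat. measure_pmf (round_pmf n E (Upsilon n m E)))"

primrec infected :: "nat \<Rightarrow> nat \<Rightarrow> (nat \<Rightarrow> nat \<Rightarrow> bool \<times> nat) \<Rightarrow> nat \<Rightarrow> nat set" where
  "infected n istar \<omega> 0 = {istar}"
| "infected n istar \<omega> (Suc j) = infected n istar \<omega> j \<union>
     {i \<in> {1..n}. i \<notin> infected n istar \<omega> j \<and> fst (\<omega> (Suc j) i)
                 \<and> snd (\<omega> (Suc j) i) \<in> infected n istar \<omega> j}"

definition tau_spr :: "nat \<Rightarrow> nat \<Rightarrow> (nat \<Rightarrow> nat \<Rightarrow> bool \<times> nat) \<Rightarrow> enat" where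
  "tau_spr n istar \<omega> =
     (if \<exists>j. infected n istar \<omega> j = {1..n}
      then enat (LEAST j. infected n istar \<omega> j = {1..n}) else \<infinity>)"

definition A_seq :: "real \<Rightarrow> enat \<Rightarrow> ennreal" where
  "A_seq \<beta> x = (case x of enat j \<Rightarrow> ennreal (real_of_int \<lceil>real j powr \<beta>\<rceil>) | \<infinity> \<Rightarrow> \<infinity>)"

end

theory Submission
  imports Defs "HOL-Library.Transitive_Closure_Table"
begin

text \<open>For every honest agent v fix a simple path from i* to v in the honest subgraph; it has at
most n - 1 edges. Cut time into blocks of b rounds. If, for every such path, the k-th vertex of
the path contacts its predecessor at least once during the k-th block, then every agent is
infected after (n - 1) b rounds. An agent u contacts a given honest neighbour in a round with
probability \<Upsilon> / d_hon(u) \<ge> q = \<Upsilon> / d_hon_max, independently over the rounds, so by the union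
bound P(\<tau> > (n - 1) b) \<le> n (n - 1) (1 - q)^b. Splitting according to the least block length
b0 + k for which no step fails and summing over k, the geometric decay of these
probabilities beats the polynomial growth of A once b0 \<approx> h_\<dagger>, which gives
E[A_(2\<tau>)] \<le> 3 (2 (n - 1) (b0 + 1))^\<beta>.\<close>

text \<open>fst (\<omega> j u) and snd (\<omega> j u) are the paper's Y_j^(u) and H_j^(u); so \<omega> lies in
no_transmission u w t b iff u never contacts w during the rounds t + 1, ..., t + b.\<close>

definition no_transmission :: "nat \<Rightarrow> nat \<Rightarrow> nat \<Rightarrow> nat \<Rightarrow> (nat \<Rightarrow> nat \<Rightarrow> bool \<times> nat) set" where
  "no_transmission u w t b = {\<omega>. \<forall>j\<in>{t+1..t+b}. \<not> (fst (\<omega> j u) \<and> snd (\<omega> j u) = w)}"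

lemma infected_mono: "j \<le> j' \<Longrightarrow> infected n istar \<omega> j \<subseteq> infected n istar \<omega> j'"
  by (induction j' rule: dec_induct) auto

lemma infected_subset: "istar \<in> {1..n} \<Longrightarrow> infected n istar \<omega> j \<subseteq> {1..n}"
  by (induction j) auto

lemma infected_after_transmission:
  assumes "w \<in> infected n istar \<omega> t" "u \<in> {1..n}" "\<omega> \<notin> no_transmission u w t b"
  shows "u \<in> infected n istar \<omega> (t + b)"
proof -
  obtain j where "j \<in> {t+1..t+b}" "fst (\<omega> j u)" "snd (\<omega> j u) = w"
    using assms(3) unfolding no_transmission_def by auto
  moreover from this obtain j' where "j = Suc j'" "t \<le> j'" "Suc j' \<le> t + b"
    by (cases j) auto
  ultimately have "u \<in> infected n istar \<omega> (Suc j')"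
    using assms(1,2) infected_mono[of t j'] by auto
  thus ?thesis using infected_mono[OF \<open>Suc j' \<le> t + b\<close>] by blast
qed

lemma infected_along_path:
  assumes "rtrancl_path R x xs y" "\<And>a c. R a c \<Longrightarrow> c \<in> {1..n}" "x \<in> infected n istar \<omega> t"
    and "\<forall>k<length xs. \<omega> \<notin> no_transmission (xs ! k) ((x # xs) ! k) (t + k * b) b"
  shows "y \<in> infected n istar \<omega> (t + length xs * b)"
  using assms(1,3,4)
proof (induction x xs y arbitrary: t rule: rtrancl_path.induct)
  case (base x)
  thus ?case by simp
next
  case (step x z zs y)
  have "z \<in> infected n istar \<omega> (t + b)"
    using infected_after_transmission[OF step.prems(1)] step.prems(2)[rule_format, of 0]
      assms(2)[OF step.hyps(1)] by simp
  moreover have "\<forall>k<length zs. \<omega> \<notin> no_transmission (zs ! k) ((z # zs) ! k) (t + b + k * b) b"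
  proof (intro allI impI)
    fix k assume "k < length zs"
    thus "\<omega> \<notin> no_transmission (zs ! k) ((z # zs) ! k) (t + b + k * b) b"
      using step.prems(2)[rule_format, of "Suc k"] by (simp add: algebra_simps)
  qed
  ultimately have "y \<in> infected n istar \<omega> (t + b + length zs * b)" by (rule step.IH)
  thus ?case by (simp add: algebra_simps)
qed

lemma tau_spr_le: "infected n istar \<omega> t = {1..n} \<Longrightarrow> tau_spr n istar \<omega> \<le> enat t"
  unfolding tau_spr_def by (auto intro: Least_le)

lemma tau_spr_single_agent: "istar \<in> {1..1} \<Longrightarrow> tau_spr 1 istar \<omega> = 0"
  using tau_spr_le[of 1 istar \<omega> 0] by (simp add: zero_enat_def[symmetric])

lemma finite_hon_nbrs: "finite (hon_nbrs n E u)"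
  unfolding hon_nbrs_def by simp

lemma round_pmf_component:
  assumes "u \<in> {1..n}"
  shows "map_pmf (\<lambda>f. f u) (round_pmf n E p) = pair_pmf (bernoulli_pmf p) (pmf_of_set (hon_nbrs n E u))"
  unfolding round_pmf_def using assms by (subst Pi_pmf_component) auto

lemma prob_round_transmission:
  assumes "w \<in> hon_nbrs n E u" "u \<in> {1..n}" "0 \<le> p" "p \<le> 1"
  shows "measure_pmf.prob (round_pmf n E p) {f. fst (f u) \<and> snd (f u) = w}
       = p / card (hon_nbrs n E u)"
proof -
  have ne: "hon_nbrs n E u \<noteq> {}" using assms(1) by auto
  have "{f. fst (f u) \<and> snd (f u) = w} = (\<lambda>f. f u) -` {(True, w)}"
    by (auto simp: prod_eq_iff)
  hence "measure_pmf.prob (round_pmf n E p) {f. fst (f u) \<and> snd (f u) = w}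
      = measure_pmf.prob (pair_pmf (bernoulli_pmf p) (pmf_of_set (hon_nbrs n E u))) {(True, w)}"
    by (simp add: measure_map_pmf[symmetric] round_pmf_component[OF assms(2)])
  also have "\<dots> = p / card (hon_nbrs n E u)"
    using assms by (subst measure_pmf_single) (simp add: pmf_pair pmf_of_set[OF ne finite_hon_nbrs])
  finally show ?thesis .
qed

lemma no_transmission_prod_emb:
  "no_transmission u w t b = prod_emb UNIV (\<lambda>j. measure_pmf (round_pmf n E p)) {t+1..t+b}
     (Pi\<^sub>E {t+1..t+b} (\<lambda>_. {f. \<not> (fst (f u) \<and> snd (f u) = w)}))"
  unfolding no_transmission_def by (rule set_eqI) (simp add: prod_emb_iff PiE_iff)

lemma no_transmission_sets: "no_transmission u w t b \<in> sets (noisy_space n m E)"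
  unfolding noisy_space_def
  by (subst no_transmission_prod_emb[where n=n and E=E and p="Upsilon n m E"], rule sets_PiM_I) auto

lemma prob_space_noisy_space: "prob_space (noisy_space n m E)"
  unfolding noisy_space_def by (rule prob_space_PiM) (simp add: prob_space_measure_pmf)

lemma emeasure_no_transmission:
  assumes "w \<in> hon_nbrs n E u" "u \<in> {1..n}" "0 \<le> Upsilon n m E" "Upsilon n m E \<le> 1"
  shows "emeasure (noisy_space n m E) (no_transmission u w t b)
    = ennreal ((1 - Upsilon n m E / card (hon_nbrs n E u)) ^ b)"
proof -
  let ?p = "Upsilon n m E" and ?T = "{f. fst (f u) \<and> snd (f u) = w}"
  have "emeasure (measure_pmf (round_pmf n E ?p)) (UNIV - ?T) = ennreal (1 - ?p / card (hon_nbrs n E u))"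
    using prob_round_transmission[OF assms]
    by (simp add: measure_pmf.emeasure_eq_measure measure_pmf.prob_compl[where A="?T", simplified])
  moreover have "1 \<le> card (hon_nbrs n E u)"
    using assms(1) finite_hon_nbrs by (metis One_nat_def Suc_leI card_gt_0_iff empty_iff)
  hence "?p / card (hon_nbrs n E u) \<le> 1" using assms(4) by (simp add: divide_le_eq_1)
  ultimately show ?thesis
    unfolding noisy_space_def no_transmission_prod_emb[where n=n and E=E and p="?p"]
    by (subst emeasure_PiM_emb) (auto simp: prob_space_measure_pmf Diff_eq Compl_eq ennreal_power)
qed

lemma nn_integral_le_failure_series:
  fixes f :: "'a \<Rightarrow> ennreal" and S :: "nat \<Rightarrow> 'a set" and g :: "nat \<Rightarrow> real"
  assumes "prob_space M" and S_sets: "\<And>k. S k \<in> sets M" and g_ge_1: "\<And>k. 1 \<le> g k"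
    and f_le: "\<And>k \<omega>. \<omega> \<in> space M \<Longrightarrow> \<omega> \<notin> S k \<Longrightarrow> f \<omega> \<le> ennreal (g k)"
  shows "(\<integral>\<^sup>+\<omega>. f \<omega> \<partial>M) \<le> ennreal (g 0) + (\<Sum>k. ennreal (g (Suc k)) * emeasure M (S k))"
proof -
  interpret prob_space M by fact
  define F where "F \<omega> = (\<Sum>k. ennreal (g (Suc k)) * indicator (S k) \<omega>)" for \<omega>
  have F_ge: "ennreal (g (Suc k)) \<le> F \<omega>" if "\<omega> \<in> S k" for k \<omega>
    using sum_le_suminf[of "\<lambda>k. ennreal (g (Suc k)) * indicator (S k) \<omega>" "{k}"] that
    unfolding F_def by simp
  txt \<open>If k is least with \<open>\<omega> \<notin> S k\<close>, then \<open>\<omega> \<in> S (k - 1)\<close> and a single term of F dominates f.\<close>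
  have "f \<omega> \<le> ennreal (g 0) + F \<omega>" if \<omega>: "\<omega> \<in> space M" for \<omega>
  proof (cases "\<exists>k. \<omega> \<notin> S k")
    case True
    define k where "k = (LEAST k. \<omega> \<notin> S k)"
    have "\<omega> \<notin> S k" unfolding k_def using True by (rule LeastI_ex)
    show ?thesis
    proof (cases k)
      case 0
      thus ?thesis using f_le[OF \<omega> \<open>\<omega> \<notin> S k\<close>] by (simp add: add_increasing2)
    next
      case (Suc k')
      hence "\<omega> \<in> S k'" using not_less_Least[of k' "\<lambda>k. \<omega> \<notin> S k"] unfolding k_def by auto
      thus ?thesis using f_le[OF \<omega> \<open>\<omega> \<notin> S k\<close>] F_ge Suc by (metis add_increasing order_trans zero_le)
    qed
  next
    case False
    have "of_nat L \<le> F \<omega>" for L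
    proof -
      have "of_nat L = (\<Sum>k<L. (1::ennreal))" by simp
      also have "\<dots> \<le> (\<Sum>k<L. ennreal (g (Suc k)) * indicator (S k) \<omega>)"
        using False g_ge_1 by (intro sum_mono) auto
      also have "\<dots> \<le> F \<omega>" unfolding F_def by (rule sum_le_suminf) auto
      finally show ?thesis .
    qed
    hence "F \<omega> = \<infinity>"
      by (metis ennreal_Ex_less_of_nat infinity_ennreal_def not_le top.not_eq_extremum)
    thus ?thesis by simp
  qed
  hence "(\<integral>\<^sup>+\<omega>. f \<omega> \<partial>M) \<le> (\<integral>\<^sup>+\<omega>. ennreal (g 0) + F \<omega> \<partial>M)"
    by (intro nn_integral_mono)
  also have "\<dots> = ennreal (g 0) + (\<Sum>k. ennreal (g (Suc k)) * emeasure M (S k))"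
    unfolding F_def using S_sets
    by (simp add: nn_integral_add nn_integral_suminf nn_integral_cmult_indicator emeasure_space_1)
  finally show ?thesis .
qed

lemma A_seq_double_le:
  assumes "tt \<le> enat t" "\<beta> > 0"
  shows "A_seq \<beta> (2 * tt) \<le> ennreal (real (2 * t) powr \<beta> + 1)"
proof -
  obtain s where s: "tt = enat s" "s \<le> t" using assms(1) by (cases tt) auto
  have "real (2 * s) powr \<beta> \<le> real (2 * t) powr \<beta>"
    using s assms by (intro powr_mono2) auto
  hence "real_of_int \<lceil>real (2 * s) powr \<beta>\<rceil> \<le> real (2 * t) powr \<beta> + 1" by linarith
  moreover have "A_seq \<beta> (2 * tt) = ennreal (real_of_int \<lceil>real (2 * s) powr \<beta>\<rceil>)"
    using s by (simp add: A_seq_def numeral_eq_enat)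
  ultimately show ?thesis by (metis ennreal_leI)
qed

lemma one_minus_power_le_exp:
  fixes q :: real
  assumes "q \<le> 1"
  shows "(1 - q) ^ j \<le> exp (- q * j)"
proof -
  have "(1 - q) ^ j \<le> exp (- q) ^ j"
    using assms exp_ge_add_one_self[of "- q"] by (intro power_mono) auto
  thus ?thesis by (simp add: exp_of_nat_mult[symmetric] mult.commute)
qed

lemma one_minus_exp_half_ge:
  fixes q :: real
  assumes "0 < q" "q \<le> 1"
  shows "q / 3 \<le> 1 - exp (- q / 2)"
proof -
  have "exp (- q / 2) = 1 / exp (q / 2)" by (simp add: exp_minus field_simps)
  also have "\<dots> \<le> 1 / (1 + q / 2)"
    using assms exp_ge_add_one_self[of "q / 2"] by (intro divide_left_mono) auto
  also have "\<dots> \<le> 1 - q / 3" using assms by (simp add: field_simps)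
  finally show ?thesis by simp
qed

lemma shifted_powr_le_exp:
  fixes q \<beta> :: real and k b :: nat
  assumes "0 < q" "0 < \<beta>" "2 * \<beta> / q \<le> real b + 1"
  shows "(real k + real b + 1) powr \<beta> \<le> (real b + 1) powr \<beta> * exp (q / 2 * k)"
proof -
  have "real k + real b + 1 = (real b + 1) * (1 + k / (real b + 1))"
    by (simp add: field_simps)
  hence "(real k + real b + 1) powr \<beta> = (real b + 1) powr \<beta> * (1 + k / (real b + 1)) powr \<beta>"
    by (simp add: powr_mult)
  also have "(1 + k / (real b + 1)) powr \<beta> \<le> exp (k / (real b + 1)) powr \<beta>"
    using assms by (intro powr_mono2) (auto simp: exp_ge_add_one_self)
  also have "\<dots> = exp (\<beta> / (real b + 1) * k)" by (simp add: powr_def)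
  also have "\<dots> \<le> exp (q / 2 * k)"
  proof -
    have "\<beta> / (real b + 1) \<le> q / 2" using assms by (simp add: field_simps)
    hence "\<beta> / (real b + 1) * k \<le> q / 2 * k" by (rule mult_right_mono) simp
    thus ?thesis by (subst exp_le_cancel_iff)
  qed
  finally show ?thesis by (simp add: mult_left_mono)
qed

lemma failure_term_le:
  fixes q \<beta> c :: real and N b k :: nat
  assumes q: "0 < q" "q \<le> 1" and "0 < \<beta>" "1 \<le> N" "0 < c"
    and b: "2 * \<beta> / q \<le> real b + 1" "ln (6 * c / q) / q \<le> real b"
  shows "(real (2 * (N * (Suc k + b))) powr \<beta> + 1) * (c * (1 - q) ^ (k + b))
    \<le> q / 3 * (2 * real N * (real b + 1)) powr \<beta> * exp (- q / 2) ^ k"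
proof -
  define K where "K = (2 * real N * (real b + 1)) powr \<beta>"
  have "1 * 1 \<le> (2 * real N) * (real b + 1)" using assms by (intro mult_mono) auto
  hence "1 \<le> K" unfolding K_def using assms by (intro ge_one_powr_ge_zero) auto
  have "real (2 * (N * (Suc k + b))) powr \<beta> = (2 * real N) powr \<beta> * (real k + real b + 1) powr \<beta>"
    by (simp add: powr_mult[symmetric] algebra_simps)
  also have "\<dots> \<le> (2 * real N) powr \<beta> * ((real b + 1) powr \<beta> * exp (q / 2 * k))"
    using shifted_powr_le_exp[OF q(1) assms(3) b(1)] by (intro mult_left_mono) auto
  also have "\<dots> = K * exp (q / 2 * k)" unfolding K_def by (simp add: powr_mult)
  moreover have "1 * 1 \<le> K * exp (q / 2 * k)"
    using \<open>1 \<le> K\<close> q(1) by (intro mult_mono) auto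
  ultimately have growth: "real (2 * (N * (Suc k + b))) powr \<beta> + 1 \<le> 2 * K * exp (q / 2 * k)"
    by linarith
  have decay: "c * (1 - q) ^ (k + b) \<le> q / 6 * exp (- q * k)"
  proof -
    have "ln (6 * c / q) \<le> q * b" using b(2) q by (simp add: field_simps)
    hence "exp (- q * b) \<le> exp (- ln (6 * c / q))" by simp
    also have "\<dots> = q / (6 * c)" using q \<open>0 < c\<close> by (simp add: exp_minus)
    finally have "exp (- q * b) \<le> q / (6 * c)" .
    hence "c * exp (- q * b) \<le> q / 6" using \<open>0 < c\<close> by (simp add: field_simps)
    moreover have "c * (1 - q) ^ (k + b) \<le> c * exp (- q * b) * exp (- q * k)"
      using one_minus_power_le_exp[OF q(2), of "k + b"] \<open>0 < c\<close>
      by (simp add: exp_add[symmetric] algebra_simps)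
    ultimately show ?thesis by (meson exp_ge_zero mult_right_mono order_trans)
  qed
  have "(real (2 * (N * (Suc k + b))) powr \<beta> + 1) * (c * (1 - q) ^ (k + b))
      \<le> 2 * K * exp (q / 2 * k) * (q / 6 * exp (- q * k))"
    by (rule mult_mono[OF growth decay]) (use q \<open>1 \<le> K\<close> \<open>0 < c\<close> in auto)
  also have "\<dots> = q / 3 * K * exp (- q / 2) ^ k"
    by (simp add: exp_of_nat_mult[symmetric] mult_exp_exp algebra_simps)
  finally show ?thesis unfolding K_def .
qed

lemma failure_series_le:
  fixes q \<beta> c :: real and N b :: nat
  assumes "0 < q" "q \<le> 1" "0 < \<beta>" "1 \<le> N" "0 < c"
    and "2 * \<beta> / q \<le> real b + 1" "ln (6 * c / q) / q \<le> real b"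
  shows "(\<Sum>k. ennreal (real (2 * (N * (Suc k + b))) powr \<beta> + 1) * ennreal (c * (1 - q) ^ (k + b)))
    \<le> ennreal ((2 * real N * (real b + 1)) powr \<beta>)"
proof -
  define K where "K = (2 * real N * (real b + 1)) powr \<beta>"
  have ratio: "norm (exp (- q / 2)) < 1" using assms by simp
  have "(\<Sum>k. ennreal (real (2 * (N * (Suc k + b))) powr \<beta> + 1) * ennreal (c * (1 - q) ^ (k + b)))
      \<le> (\<Sum>k. ennreal (q / 3 * K * exp (- q / 2) ^ k))"
  proof (intro suminf_le summableI)
    fix k
    have "ennreal (real (2 * (N * (Suc k + b))) powr \<beta> + 1) * ennreal (c * (1 - q) ^ (k + b))
        = ennreal ((real (2 * (N * (Suc k + b))) powr \<beta> + 1) * (c * (1 - q) ^ (k + b)))"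
      by (rule ennreal_mult'[symmetric]) simp
    thus "ennreal (real (2 * (N * (Suc k + b))) powr \<beta> + 1) * ennreal (c * (1 - q) ^ (k + b))
        \<le> ennreal (q / 3 * K * exp (- q / 2) ^ k)"
      using failure_term_le[OF assms] unfolding K_def by (metis ennreal_leI)
  qed
  also have "\<dots> = ennreal (q / 3 * K / (1 - exp (- q / 2)))"
    using sums_mult[OF geometric_sums[OF ratio], of "q / 3 * K"] assms
    by (intro suminf_ennreal_eq) (auto simp: K_def)
  also have "\<dots> \<le> ennreal K"
  proof (rule ennreal_leI)
    have "0 < 1 - exp (- q / 2)" using assms by simp
    thus "q / 3 * K / (1 - exp (- q / 2)) \<le> K"
      using one_minus_exp_half_ge[of q] assms
      by (simp add: K_def divide_le_eq mult.commute mult_left_mono)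
  qed
  finally show ?thesis unfolding K_def .
qed

lemma nn_integral_A_seq_le:
  fixes M :: "'a measure" and T :: "'a \<Rightarrow> enat" and S :: "nat \<Rightarrow> 'a set"
    and N b :: nat and q \<beta> c :: real
  assumes "prob_space M" and S_sets: "\<And>b. S b \<in> sets M"
    and S_small: "\<And>b. emeasure M (S b) \<le> ennreal (c * (1 - q) ^ b)"
    and T_le: "\<And>b \<omega>. \<omega> \<in> space M \<Longrightarrow> \<omega> \<notin> S b \<Longrightarrow> T \<omega> \<le> enat (N * b)"
    and params: "0 < q" "q \<le> 1" "0 < \<beta>" "1 \<le> N" "0 < c"
    and b: "2 * \<beta> / q \<le> real b + 1" "ln (6 * c / q) / q \<le> real b"
  shows "(\<integral>\<^sup>+\<omega>. A_seq \<beta> (2 * T \<omega>) \<partial>M) \<le> ennreal (3 * (2 * real N * (real b + 1)) powr \<beta>)"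
proof -
  define g where "g k = real (2 * (N * (k + b))) powr \<beta> + 1" for k
  define K where "K = (2 * real N * (real b + 1)) powr \<beta>"
  have "(\<integral>\<^sup>+\<omega>. A_seq \<beta> (2 * T \<omega>) \<partial>M)
      \<le> ennreal (g 0) + (\<Sum>k. ennreal (g (Suc k)) * emeasure M (S (k + b)))"
    using assms(1) S_sets
  proof (rule nn_integral_le_failure_series)
    show "A_seq \<beta> (2 * T \<omega>) \<le> ennreal (g k)" if "\<omega> \<in> space M" "\<omega> \<notin> S (k + b)" for k \<omega>
      unfolding g_def using T_le[OF that] params(3) by (rule A_seq_double_le)
  qed (simp add: g_def)
  also have "(\<Sum>k. ennreal (g (Suc k)) * emeasure M (S (k + b))) \<le> ennreal K"
  proof -
    have "(\<Sum>k. ennreal (g (Suc k)) * emeasure M (S (k + b)))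
        \<le> (\<Sum>k. ennreal (g (Suc k)) * ennreal (c * (1 - q) ^ (k + b)))"
      using S_small by (intro suminf_le summableI mult_left_mono) auto
    also have "\<dots> \<le> ennreal K"
      unfolding g_def K_def by (rule failure_series_le[OF params b])
    finally show ?thesis .
  qed
  also have "ennreal (g 0) + ennreal K \<le> ennreal (3 * K)"
  proof -
    have "1 * 1 \<le> (2 * real N) * (real b + 1)" using params by (intro mult_mono) auto
    hence "1 \<le> K" unfolding K_def using params by (intro ge_one_powr_ge_zero) auto
    moreover have "real (2 * (N * b)) powr \<beta> \<le> K"
      unfolding K_def using params by (intro powr_mono2) auto
    ultimately show ?thesis
      unfolding g_def by (simp add: ennreal_plus[symmetric] del: ennreal_plus)
  qed
  finally show ?thesis unfolding K_def by (simp add: add_left_mono)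
qed

lemma rtrancl_path_nth:
  "rtrancl_path r x xs y \<Longrightarrow> k < length xs \<Longrightarrow> r ((x # xs) ! k) (xs ! k)"
proof (induction x xs y arbitrary: k rule: rtrancl_path.induct)
  case (step x z zs y)
  thus ?case by (cases k) auto
qed simp

locale connected_honest_graph =
  fixes n m istar :: nat and E :: "nat \<Rightarrow> nat \<Rightarrow> bool"
  assumes undirected: "undirected_graph {1..n+m} E"
    and connected: "hon_connected n E"
    and istar: "istar \<in> {1..n}"
    and two_le_n: "2 \<le> n"
begin

definition honest_edge :: "nat \<Rightarrow> nat \<Rightarrow> bool" where
  "honest_edge x y \<longleftrightarrow> E x y \<and> x \<in> {1..n} \<and> y \<in> {1..n}"

lemma honest_edge_hon_nbrs: "honest_edge x y \<Longrightarrow> x \<in> hon_nbrs n E y \<and> y \<in> {1..n}"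
  using undirected unfolding honest_edge_def undirected_graph_def hon_nbrs_def by auto

lemma honest_reachable: "u \<in> {1..n} \<Longrightarrow> v \<in> {1..n} \<Longrightarrow> honest_edge\<^sup>*\<^sup>* u v"
  using connected unfolding hon_connected_def honest_edge_def[abs_def] by blast

lemma hon_nbrs_nonempty:
  assumes "u \<in> {1..n}"
  shows "hon_nbrs n E u \<noteq> {}"
proof -
  obtain v where "v \<in> {1..n}" "v \<noteq> u"
  proof (cases "u = 1")
    case True
    thus ?thesis using two_le_n by (intro that[of 2]) auto
  next
    case False
    thus ?thesis using two_le_n by (intro that[of 1]) auto
  qed
  hence "honest_edge\<^sup>*\<^sup>* u v" using honest_reachable[OF assms] by blast
  then obtain w where "honest_edge u w"
    using \<open>v \<noteq> u\<close> by (cases rule: converse_rtranclpE) auto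
  thus ?thesis unfolding honest_edge_def hon_nbrs_def by auto
qed

lemma dhon_pos: "u \<in> {1..n} \<Longrightarrow> 1 \<le> dhon n E u"
  using hon_nbrs_nonempty finite_hon_nbrs unfolding dhon_def
  by (metis One_nat_def Suc_leI card_gt_0_iff)

lemma dhon_le_dhon_max: "u \<in> {1..n} \<Longrightarrow> dhon n E u \<le> dhon_max n E"
  unfolding dhon_max_def by (rule Max_ge) auto

lemma dhon_le_deg: "dhon n E u \<le> deg n m E u"
  unfolding dhon_def deg_def hon_nbrs_def by (rule card_mono) auto

lemma Upsilon_pos: "0 < Upsilon n m E"
proof -
  have "0 < real (dhon n E i) / real (deg n m E i)" if "i \<in> {1..n}" for i
    using dhon_pos[OF that] dhon_le_deg[of i] by simp
  thus ?thesis unfolding Upsilon_def using two_le_n by (subst Min_gr_iff) auto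
qed

lemma Upsilon_le_1: "Upsilon n m E \<le> 1"
proof -
  have "Upsilon n m E \<le> real (dhon n E 1) / real (deg n m E 1)"
    unfolding Upsilon_def using two_le_n by (intro Min_le) auto
  also have "\<dots> \<le> 1"
    using dhon_le_deg[of 1] by (cases "deg n m E 1 = 0") (auto simp: divide_le_eq_1)
  finally show ?thesis .
qed

definition transmission_prob :: real where
  "transmission_prob = Upsilon n m E / dhon_max n E"

lemma transmission_prob_pos: "0 < transmission_prob"
  and transmission_prob_le_1: "transmission_prob \<le> 1"
  using Upsilon_pos Upsilon_le_1 dhon_pos[of 1] dhon_le_dhon_max[of 1] two_le_n
  unfolding transmission_prob_def by (auto simp: divide_le_eq_1)

lemma exists_spreading_path:
  assumes "v \<in> {1..n}"
  shows "\<exists>xs. rtrancl_path honest_edge istar xs v \<and> distinct (istar # xs)"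
proof -
  obtain xs where "rtrancl_path honest_edge istar xs v"
    using honest_reachable[OF istar assms] by (auto simp: rtranclp_eq_rtrancl_path)
  thus ?thesis by (metis rtrancl_path_distinct)
qed

definition spreading_path :: "nat \<Rightarrow> nat list" where
  "spreading_path v = (SOME xs. rtrancl_path honest_edge istar xs v \<and> distinct (istar # xs))"

lemma spreading_path:
  assumes "v \<in> {1..n}"
  shows "rtrancl_path honest_edge istar (spreading_path v) v" "distinct (istar # spreading_path v)"
  using someI_ex[OF exists_spreading_path[OF assms]] unfolding spreading_path_def by auto

lemma spreading_path_edge:
  assumes "v \<in> {1..n}" "k < length (spreading_path v)"
  shows "(istar # spreading_path v) ! k \<in> hon_nbrs n E (spreading_path v ! k)"
    and "spreading_path v ! k \<in> {1..n}"
  using honest_edge_hon_nbrs rtrancl_path_nth[OF spreading_path(1)[OF assms(1)] assms(2)] by auto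

lemma length_spreading_path:
  assumes "v \<in> {1..n}"
  shows "length (spreading_path v) \<le> n - 1"
proof -
  have "set (istar # spreading_path v) \<subseteq> {1..n}"
    using spreading_path_edge(2)[OF assms] istar by (auto simp: in_set_conv_nth)
  hence "card (set (istar # spreading_path v)) \<le> n" using card_mono[of "{1..n}"] by fastforce
  thus ?thesis using distinct_card[OF spreading_path(2)[OF assms]] by simp
qed

definition path_steps :: "(nat \<times> nat) set" where
  "path_steps = (SIGMA v:{1..n}. {..<length (spreading_path v)})"

definition step_failure :: "nat \<Rightarrow> nat \<times> nat \<Rightarrow> (nat \<Rightarrow> nat \<Rightarrow> bool \<times> nat) set" where
  "step_failure b = (\<lambda>(v, k).
     no_transmission (spreading_path v ! k) ((istar # spreading_path v) ! k) (k * b) b)"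

definition spreading_failure :: "nat \<Rightarrow> (nat \<Rightarrow> nat \<Rightarrow> bool \<times> nat) set" where
  "spreading_failure b = \<Union> (step_failure b ` path_steps)"

lemma card_path_steps: "card path_steps \<le> n * (n - 1)"
proof -
  have "path_steps \<subseteq> {1..n} \<times> {..<n - 1}"
    unfolding path_steps_def using length_spreading_path by fastforce
  thus ?thesis by (metis card_atLeastAtMost card_cartesian_product card_lessThan card_mono
        diff_Suc_1 finite_SigmaI finite_atLeastAtMost finite_lessThan)
qed

lemma spreading_failure_sets: "spreading_failure b \<in> sets (noisy_space n m E)"
  unfolding spreading_failure_def step_failure_def path_steps_def
  by (intro sets.finite_UN) (auto simp: no_transmission_sets)

lemma tau_spr_le_unless_spreading_failure:
  assumes "\<omega> \<notin> spreading_failure b"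
  shows "tau_spr n istar \<omega> \<le> enat ((n - 1) * b)"
proof (rule tau_spr_le)
  have "v \<in> infected n istar \<omega> ((n - 1) * b)" if v: "v \<in> {1..n}" for v
  proof -
    have "v \<in> infected n istar \<omega> (0 + length (spreading_path v) * b)"
      using assms v honest_edge_hon_nbrs
      by (intro infected_along_path[OF spreading_path(1)[OF v]])
        (auto simp: spreading_failure_def step_failure_def path_steps_def)
    also have "\<dots> \<subseteq> infected n istar \<omega> ((n - 1) * b)"
      using length_spreading_path[OF v] by (intro infected_mono) simp
    finally show ?thesis .
  qed
  thus "infected n istar \<omega> ((n - 1) * b) = {1..n}" using infected_subset[OF istar] by blast
qed

lemma emeasure_step_failure:
  assumes "s \<in> path_steps"
  shows "emeasure (noisy_space n m E) (step_failure b s) \<le> ennreal ((1 - transmission_prob) ^ b)"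
proof -
  obtain v k where s: "s = (v, k)" "v \<in> {1..n}" "k < length (spreading_path v)"
    using assms unfolding path_steps_def by auto
  let ?u = "spreading_path v ! k"
  have edge: "(istar # spreading_path v) ! k \<in> hon_nbrs n E ?u" "?u \<in> {1..n}"
    using spreading_path_edge[OF s(2,3)] by auto
  have "1 \<le> real (card (hon_nbrs n E ?u))" "real (card (hon_nbrs n E ?u)) \<le> dhon_max n E"
    using dhon_pos[OF edge(2)] dhon_le_dhon_max[OF edge(2)] by (auto simp: dhon_def)
  hence "transmission_prob \<le> Upsilon n m E / card (hon_nbrs n E ?u)"
    "Upsilon n m E / card (hon_nbrs n E ?u) \<le> 1"
    unfolding transmission_prob_def using Upsilon_pos Upsilon_le_1
    by (auto intro: divide_left_mono simp: divide_le_eq_1)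
  thus ?thesis
    using emeasure_no_transmission[OF edge] Upsilon_pos Upsilon_le_1
    by (simp add: s(1) step_failure_def ennreal_leI power_mono)
qed

lemma emeasure_spreading_failure:
  "emeasure (noisy_space n m E) (spreading_failure b)
     \<le> ennreal (real (n * (n - 1)) * (1 - transmission_prob) ^ b)"
proof -
  have "emeasure (noisy_space n m E) (spreading_failure b)
      \<le> (\<Sum>s\<in>path_steps. emeasure (noisy_space n m E) (step_failure b s))"
    unfolding spreading_failure_def
    by (intro emeasure_subadditive_finite)
      (auto simp: no_transmission_sets step_failure_def path_steps_def)
  also have "\<dots> \<le> (\<Sum>_\<in>path_steps. ennreal ((1 - transmission_prob) ^ b))"
    by (intro sum_mono emeasure_step_failure)
  also have "\<dots> \<le> ennreal (real (n * (n - 1)) * (1 - transmission_prob) ^ b)"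
  proof -
    have "real (card path_steps) \<le> real (n * (n - 1))" using card_path_steps by linarith
    thus ?thesis using transmission_prob_le_1
      by (simp add: ennreal_of_nat_eq_real_of_nat ennreal_mult'[symmetric] ennreal_leI mult_right_mono
          del: of_nat_mult)
  qed
  finally show ?thesis .
qed

lemma nn_integral_A_seq_tau_spr_le:
  assumes "0 < \<beta>" "2 * \<beta> / transmission_prob \<le> real b + 1"
    and "ln (6 * real (n * (n - 1)) / transmission_prob) / transmission_prob \<le> real b"
  shows "(\<integral>\<^sup>+\<omega>. A_seq \<beta> (2 * tau_spr n istar \<omega>) \<partial>noisy_space n m E)
    \<le> ennreal (3 * (2 * real (n - 1) * (real b + 1)) powr \<beta>)"
proof (rule nn_integral_A_seq_le[where S=spreading_failure and q=transmission_prob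
      and c="real (n * (n - 1))"])
  show "prob_space (noisy_space n m E)" by (rule prob_space_noisy_space)
  show "1 \<le> n - 1" "0 < real (n * (n - 1))" using two_le_n by auto
qed (use assms spreading_failure_sets emeasure_spreading_failure tau_spr_le_unless_spreading_failure
    transmission_prob_pos transmission_prob_le_1 in auto)

end

lemma spreading_ratio_ge_16:
  fixes \<beta> q :: real and n :: nat
  assumes "1 < \<beta>" "0 < q" "q \<le> 1" "2 \<le> n"
  shows "16 \<le> 8 * \<beta> * n / q"
proof -
  have "1 * 2 \<le> \<beta> * n" using assms by (intro mult_mono) auto
  hence "16 \<le> 8 * \<beta> * n" by simp
  also have "\<dots> \<le> 8 * \<beta> * n / q"
    using assms by (simp add: le_divide_eq mult_le_cancel_left1 mult_left_le)
  finally show ?thesis .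
qed

lemma ln_failure_constant_le:
  fixes \<beta> q :: real and n :: nat
  assumes \<beta>: "1 < \<beta>" and q: "0 < q" "q \<le> 1" and n: "2 \<le> n"
  shows "ln (6 * real (n * (n - 1)) / q) \<le> 8 * \<beta> * ln (8 * \<beta> * n / q)"
proof -
  define x where "x = 8 * \<beta> * n / q"
  have "16 \<le> x" unfolding x_def using spreading_ratio_ge_16[OF assms] .
  have "real (n * (n - 1)) \<le> real n ^ 2"
    by (metis of_nat_le_iff of_nat_power diff_le_self mult_le_mono2 power2_eq_square)
  hence "real (n * (n - 1)) * q \<le> real n ^ 2 * 1"
    using q by (intro mult_mono) auto
  moreover have "real n ^ 2 * 1 \<le> real n ^ 2 * \<beta>\<^sup>2"
    using \<beta> by (intro mult_left_mono) (auto simp: one_le_power)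
  moreover have "0 \<le> real n ^ 2 * \<beta>\<^sup>2" by simp
  ultimately have "6 * (real (n * (n - 1)) * q) \<le> 64 * (real n ^ 2 * \<beta>\<^sup>2)" by linarith
  hence "6 * real (n * (n - 1)) / q \<le> x\<^sup>2"
    unfolding x_def using q by (simp add: field_simps power2_eq_square)
  moreover have "0 < 6 * real (n * (n - 1)) / q" using n q by simp
  ultimately have "ln (6 * real (n * (n - 1)) / q) \<le> ln (x\<^sup>2)"
    using \<open>16 \<le> x\<close> by (metis ln_le_cancel_iff order_less_le_trans)
  also have "\<dots> = 2 * ln x" using \<open>16 \<le> x\<close> by (simp add: ln_realpow)
  also have "\<dots> \<le> 8 * \<beta> * ln x"
    using \<beta> \<open>16 \<le> x\<close> by (intro mult_right_mono) auto
  finally show ?thesis unfolding x_def .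
qed

lemma A_budget_le:
  fixes \<beta> h :: real and n b :: nat
  assumes \<beta>: "1 < \<beta>" and "1 \<le> h" "real b + 1 \<le> 2 * h"
  shows "3 * (2 * real (n - 1) * (real b + 1)) powr \<beta>
    \<le> (2 * exp 1) powr (2 * \<beta>) * n powr \<beta> * (h powr \<beta> + 1 / (\<beta> - 1))"
proof -
  have "2 * real (n - 1) * (real b + 1) \<le> (2 * real n) * (2 * h)"
    using assms by (intro mult_mono) auto
  hence "(2 * real (n - 1) * (real b + 1)) powr \<beta> \<le> (4 * n * h) powr \<beta>"
    using \<beta> by (intro powr_mono2) auto
  moreover have "3 \<le> exp 2 powr \<beta>"
  proof -
    have "3 \<le> exp (2::real)" using exp_ge_add_one_self[of 2] by simp
    also have "\<dots> \<le> exp 2 powr \<beta>" using powr_mono[of 1 \<beta> "exp 2"] \<beta> by simp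
    finally show ?thesis .
  qed
  ultimately have "3 * (2 * real (n - 1) * (real b + 1)) powr \<beta> \<le> exp 2 powr \<beta> * (4 * n * h) powr \<beta>"
    by (intro mult_mono) auto
  also have "\<dots> = (2 * exp 1) powr (2 * \<beta>) * n powr \<beta> * h powr \<beta>"
  proof -
    have "(2 * exp 1) powr (2 * \<beta>) = (4 * exp 2) powr \<beta>"
      by (simp add: powr_powr[symmetric] power2_eq_square mult_exp_exp)
    thus ?thesis using assms by (simp add: powr_mult)
  qed
  also have "\<dots> \<le> (2 * exp 1) powr (2 * \<beta>) * n powr \<beta> * (h powr \<beta> + 1 / (\<beta> - 1))"
    using \<beta> by (intro mult_left_mono) auto
  finally show ?thesis .
qed

lemma spreading_budget:
  fixes \<beta> q :: real and n :: nat
  defines "h \<equiv> 8 * \<beta> / q * ln (8 * \<beta> * n / q)"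
  assumes \<beta>: "1 < \<beta>" and q: "0 < q" "q \<le> 1" and n: "2 \<le> n"
  shows "2 * \<beta> / q \<le> real (nat \<lceil>h\<rceil>) + 1"
    and "ln (6 * real (n * (n - 1)) / q) / q \<le> real (nat \<lceil>h\<rceil>)"
    and "3 * (2 * real (n - 1) * (real (nat \<lceil>h\<rceil>) + 1)) powr \<beta>
      \<le> (2 * exp 1) powr (2 * \<beta>) * n powr \<beta> * (h powr \<beta> + 1 / (\<beta> - 1))"
proof -
  have "exp 1 \<le> 8 * \<beta> * n / q" using spreading_ratio_ge_16[OF assms(2-)] exp_le by linarith
  hence "1 \<le> ln (8 * \<beta> * n / q)" by (metis exp_gt_zero ln_ge_iff order_less_le_trans)
  hence "8 * \<beta> / q * 1 \<le> h" unfolding h_def using \<beta> q by (intro mult_left_mono) auto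
  moreover have "8 \<le> 8 * \<beta> / q" using \<beta> q by (simp add: le_divide_eq)
  ultimately have "8 \<le> h" "8 * \<beta> / q \<le> h" by linarith+
  hence h_le: "h \<le> real (nat \<lceil>h\<rceil>)" "real (nat \<lceil>h\<rceil>) \<le> h + 1"
    using of_int_ceiling_le_add_one[of h] by linarith+
  have "2 * \<beta> / q \<le> 8 * \<beta> / q" using \<beta> q by (intro divide_right_mono) auto
  thus "2 * \<beta> / q \<le> real (nat \<lceil>h\<rceil>) + 1" using \<open>8 * \<beta> / q \<le> h\<close> h_le by linarith
  have "ln (6 * real (n * (n - 1)) / q) / q \<le> h"
    using ln_failure_constant_le[OF assms(2-)] q unfolding h_def
    by (simp add: divide_right_mono)
  thus "ln (6 * real (n * (n - 1)) / q) / q \<le> real (nat \<lceil>h\<rceil>)" using h_le by linarith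
  show "3 * (2 * real (n - 1) * (real (nat \<lceil>h\<rceil>) + 1)) powr \<beta>
      \<le> (2 * exp 1) powr (2 * \<beta>) * n powr \<beta> * (h powr \<beta> + 1 / (\<beta> - 1))"
    using \<open>8 \<le> h\<close> h_le by (intro A_budget_le[OF \<beta>]) linarith+
qed

theorem mainTheorem16:
  fixes n m istar :: nat and E :: "nat \<Rightarrow> nat \<Rightarrow> bool" and \<beta> :: real
  assumes "undirected_graph {1..n+m} E"
    and "hon_connected n E"
    and "istar \<in> {1..n}"
    and "\<beta> > 1"
  shows "(\<integral>\<^sup>+ \<omega>. A_seq \<beta> (2 * tau_spr n istar \<omega>) \<partial>noisy_space n m E)
     \<le> ennreal ((2 * exp 1) powr (2 * \<beta>) * real n powr \<beta> *
         (((8 * \<beta> * real (dhon_max n E) / Upsilon n m E)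
            * ln (8 * \<beta> * real (dhon_max n E) * real n / Upsilon n m E)) powr \<beta>
          + 1 / (\<beta> - 1)))"
proof (cases "n = 1")
  case True
  hence "2 * tau_spr n istar \<omega> = enat 0" for \<omega>
    using tau_spr_single_agent assms(3) by (simp add: zero_enat_def[symmetric])
  hence "A_seq \<beta> (2 * tau_spr n istar \<omega>) = 0" for \<omega>
    using assms(4) by (simp add: A_seq_def)
  thus ?thesis by simp
next
  case False
  then interpret connected_honest_graph n m istar E using assms by unfold_locales auto
  define h where "h = 8 * \<beta> / transmission_prob * ln (8 * \<beta> * n / transmission_prob)"
  note budget = spreading_budget[OF assms(4) transmission_prob_pos transmission_prob_le_1 two_le_n,
      folded h_def]
  have "(\<integral>\<^sup>+\<omega>. A_seq \<beta> (2 * tau_spr n istar \<omega>) \<partial>noisy_space n m E)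
      \<le> ennreal (3 * (2 * real (n - 1) * (real (nat \<lceil>h\<rceil>) + 1)) powr \<beta>)"
    using assms(4) budget(1,2) by (intro nn_integral_A_seq_tau_spr_le) auto
  also have "\<dots> \<le> ennreal ((2 * exp 1) powr (2 * \<beta>) * n powr \<beta> * (h powr \<beta> + 1 / (\<beta> - 1)))"
    using budget(3) by (rule ennreal_leI)
  also have "h = 8 * \<beta> * real (dhon_max n E) / Upsilon n m E
      * ln (8 * \<beta> * real (dhon_max n E) * real n / Upsilon n m E)"
    unfolding h_def transmission_prob_def by (simp add: ac_simps)
  finally show ?thesis .
qed

end
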